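(* Let $p$ (true dynamics) and $\hat p$ (learned model) be dynamics kernels, and let $\pi_D$ (data-collecting policy) and $\pi$ be policies. Suppose $$\sup_{t\ge 0}\ \mathbb E_{s\sim d_t^{\pi_D},\,a\sim \pi_D(\cdot\mid s)}\Big[D_{TV}\big(p(\cdot\mid s,a),\hat p(\cdot\mid s,a)\big)\Big]\le \epsilon_m \qquad\text{and}\qquad \sup_{s\in\mathcal S} D_{TV}\big(\pi_D(\cdot\mid s),\pi(\cdot\mid s)\big)\le\epsilon_\pi .$$ Then, writing $\eta[\pi]=\eta(\pi,p)$ and $\hat\eta[\pi]=\eta(\pi,\hat p)$, $$\eta[\pi]\ \ge\ \hat\eta[\pi]-\frac{2\gamma r_{\max}(\epsilon_m+2\epsilon_\pi)}{(1-\gamma)^2}-\frac{4r_{\max}\epsilon_\pi}{1-\gamma}.$$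
   Context: Let $\mathcal S$ and $\mathcal A$ be countable (e.g. finite) state and action spaces, $\rho_0$ a probability distribution on $\mathcal S$ (initial state distribution), $\gamma\in(0,1)$ a discount factor, and $r:\mathcal S\times\mathcal A\to\mathbb R$ a reward function with $|r(s,a)|\le r_{\max}$ for all $(s,a)$. A policy is a Markov kernel $\pi(a\mid s)$ from $\mathcal S$ to $\mathcal A$; a dynamics kernel is a Markov kernel $q(s'\mid s,a)$ from $\mathcal S\times\mathcal A$ to $\mathcal S$. For a policy $\pi$ and dynamics $q$, the return is $\eta(\pi,q)=\sum_{t\ge0}\gamma^t\,\mathbb E[r(s_t,a_t)]$, where $s_0\sim\rho_0$, $a_t\sim\pi(\cdot\mid s_t)$, $s_{t+1}\sim q(\cdot\mid s_t,a_t)$. For probability distributions $\mu,\nu$ on a countable set, $D_{TV}(\mu,\nu)=\frac12\sum_x|\mu(x)-\nu(x)|$. Here $d_t^{\pi_D}$ denotes the distribution of $s_t$ when $s_0\sim\rho_0$, $a_i\sim\pi_D(\cdot\mid s_i)$, $s_{i+1}\sim p(\cdot\mid s_i,a_i)$ (the time-$t$ state marginal of $\pi_D$ under the true dynamics $p$). *)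

theory Defs
  imports "HOL-Probability.Probability"
begin

definition tv_dist :: "'x pmf \<Rightarrow> 'x pmf \<Rightarrow> real" where
  "tv_dist \<mu> \<nu> = (\<Sum>\<^sub>\<infinity>x. \<bar>pmf \<mu> x - pmf \<nu> x\<bar>) / 2"

fun state_marg :: "'s pmf \<Rightarrow> ('s \<Rightarrow> 'a pmf) \<Rightarrow> ('s \<Rightarrow> 'a \<Rightarrow> 's pmf) \<Rightarrow> nat \<Rightarrow> 's pmf" where
  "state_marg \<rho>0 \<pi> q 0 = \<rho>0"
| "state_marg \<rho>0 \<pi> q (Suc t) =
     bind_pmf (state_marg \<rho>0 \<pi> q t) (\<lambda>s. bind_pmf (\<pi> s) (\<lambda>a. q s a))"

definition sa_marg :: "'s pmf \<Rightarrow> ('s \<Rightarrow> 'a pmf) \<Rightarrow> ('s \<Rightarrow> 'a \<Rightarrow> 's pmf) \<Rightarrow> nat \<Rightarrow> ('s \<times> 'a) pmf" where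
  "sa_marg \<rho>0 \<pi> q t = bind_pmf (state_marg \<rho>0 \<pi> q t) (\<lambda>s. map_pmf (\<lambda>a. (s, a)) (\<pi> s))"

definition ret :: "'s pmf \<Rightarrow> real \<Rightarrow> ('s \<Rightarrow> 'a \<Rightarrow> real) \<Rightarrow> ('s \<Rightarrow> 'a pmf) \<Rightarrow> ('s \<Rightarrow> 'a \<Rightarrow> 's pmf) \<Rightarrow> real" where
  "ret \<rho>0 \<gamma> r \<pi> q =
     (\<Sum>t. \<gamma> ^ t * measure_pmf.expectation (sa_marg \<rho>0 \<pi> q t) (\<lambda>(s, a). r s a))"

end

theory Submission
  imports Defs
begin

text \<open>Comparing both returns with the state-action marginals of the data-collecting policy
  under the true dynamics: the marginals of \<open>\<pi>\<close> and \<open>\<pi>D\<close> under \<open>p\<close> drift apart by at most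
  \<open>\<epsilon>\<pi>\<close> per step, and those of \<open>\<pi>D\<close> under \<open>p\<close> and \<open>\<pi>\<close> under \<open>phat\<close> by at most
  \<open>\<epsilon>m + \<epsilon>\<pi>\<close> per step, because total variation contracts under Markov kernels.
  Drawing the action costs a further \<open>\<epsilon>\<pi>\<close> each, so at time \<open>t\<close> the state-action
  marginals of \<open>\<pi>\<close> under \<open>p\<close> and under \<open>phat\<close> are \<open>t (\<epsilon>m + 2\<epsilon>\<pi>) + 2\<epsilon>\<pi>\<close> apart.
  A reward bounded by \<open>rmax\<close> changes its expectation by at most \<open>2 rmax\<close> times the
  total variation distance, and summing against \<open>\<gamma>\<^sup>t\<close> gives the two error terms.\<close>

abbreviation E :: "'x pmf \<Rightarrow> ('x \<Rightarrow> real) \<Rightarrow> real" where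
  "E \<mu> h \<equiv> measure_pmf.expectation \<mu> h"

lemma integrable_measure_pmf_bounded:
  fixes h :: "'x \<Rightarrow> real"
  assumes "\<And>x. \<bar>h x\<bar> \<le> B"
  shows "integrable (measure_pmf \<mu>) h"
  by (rule measure_pmf.integrable_const_bound[where B=B]) (use assms in auto)

lemma expectation_le_const:
  fixes h :: "'x \<Rightarrow> real"
  assumes "\<And>x. h x \<le> c" "\<And>x. \<bar>h x\<bar> \<le> B"
  shows "E \<mu> h \<le> c"
  by (rule measure_pmf.integral_le_const)
     (use assms integrable_measure_pmf_bounded[OF assms(2)] in auto)

lemma abs_expectation_le:
  fixes h :: "'x \<Rightarrow> real"
  assumes "\<And>x. \<bar>h x\<bar> \<le> B"
  shows "\<bar>E \<mu> h\<bar> \<le> B"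
proof -
  have "E \<mu> (\<lambda>x. \<bar>h x\<bar>) \<le> B"
    by (rule expectation_le_const[where B=B]) (use assms in auto)
  then show ?thesis
    using integral_abs_bound[of "measure_pmf \<mu>" h] by linarith
qed

lemma expectation_bind_pmf:
  fixes h :: "'b \<Rightarrow> real"
  assumes "\<And>x. \<bar>h x\<bar> \<le> B"
  shows "E (bind_pmf M N) h = E M (\<lambda>x. E (N x) h)"
  unfolding measure_pmf_bind
  by (rule integral_bind[where K="count_space UNIV" and B=B and B'=1])
     (use assms in \<open>auto simp: measure_pmf.prob_space_axioms prob_space_imp_subprob_space
        measure_pmf.finite_measure_axioms space_subprob_algebra sets_measure_pmf_count_space\<close>)

lemma has_sum_diff:
  fixes f g :: "'a \<Rightarrow> 'b::topological_ab_group_add"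
  assumes "(f has_sum a) A" "(g has_sum b) A"
  shows "((\<lambda>x. f x - g x) has_sum (a - b)) A"
proof -
  have "((\<lambda>x. - g x) has_sum (- b)) A"
    using assms(2) by (simp add: has_sum_uminus)
  from has_sum_add[OF assms(1) this] show ?thesis by simp
qed

lemma pmf_summable_on: "pmf \<mu> summable_on A"
  using pmf_abs_summable abs_summable_equivalent abs_summable_summable by blast

lemma expectation_has_sum:
  fixes h :: "'x \<Rightarrow> real"
  assumes "\<And>x. \<bar>h x\<bar> \<le> B"
  shows "((\<lambda>x. pmf \<mu> x * h x) has_sum E \<mu> h) UNIV"
proof -
  have "(\<lambda>x. B * pmf \<mu> x) summable_on UNIV"
    by (intro summable_on_cmult_right pmf_summable_on)
  then have abs: "(\<lambda>x. norm (pmf \<mu> x * h x)) summable_on UNIV"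
    by (rule summable_on_comparison_test)
       (auto simp: abs_mult mult.commute intro: mult_right_mono assms)
  then have "E \<mu> h = infsum (\<lambda>x. pmf \<mu> x * h x) UNIV"
    using pmf_expectation_eq_infsetsum infsetsum_infsum abs_summable_equivalent by metis
  with abs show ?thesis
    using abs_summable_summable by fastforce
qed

lemma expectation_unit_interval:
  fixes h :: "'x \<Rightarrow> real"
  assumes "\<And>x. 0 \<le> h x" "\<And>x. h x \<le> 1"
  shows "0 \<le> E \<mu> h" "E \<mu> h \<le> 1"
  using assms integral_nonneg expectation_le_const[of h 1 1 \<mu>] by (fastforce simp: abs_le_iff)+

text \<open>The positive part of \<open>pmf \<mu> - pmf \<nu>\<close> sums to half the total mass of its absolute
  value, since \<open>pmf \<mu> - pmf \<nu>\<close> itself sums to \<open>0\<close>.\<close>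
lemma tv_dist_has_sum_pos_part:
  "((\<lambda>x. max (pmf \<mu> x - pmf \<nu> x) 0) has_sum tv_dist \<mu> \<nu>) UNIV"
proof -
  define D where "D x = pmf \<mu> x - pmf \<nu> x" for x
  have pmf_has_sum: "(pmf \<rho> has_sum 1) UNIV" for \<rho> :: "'a pmf"
    using expectation_has_sum[of "\<lambda>_. 1" 1 \<rho>] by simp
  have D: "(D has_sum 0) UNIV"
    unfolding D_def using has_sum_diff[OF pmf_has_sum pmf_has_sum] by simp
  have "(\<lambda>x. max (D x) 0) summable_on UNIV"
    by (rule summable_on_comparison_test[OF pmf_summable_on[of \<mu>]]) (auto simp: D_def)
  then obtain m where m: "((\<lambda>x. max (D x) 0) has_sum m) UNIV"
    using has_sum_infsum by blast
  have "((\<lambda>x. 2 * max (D x) 0 - D x) has_sum (2 * m - 0)) UNIV"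
    by (rule has_sum_diff[OF has_sum_cmult_right[OF m] D])
  moreover have "(\<lambda>x. 2 * max (D x) 0 - D x) = (\<lambda>x. \<bar>pmf \<mu> x - pmf \<nu> x\<bar>)"
    by (auto simp: D_def fun_eq_iff max_def)
  ultimately have "tv_dist \<mu> \<nu> = m"
    unfolding tv_dist_def by (simp add: infsumI)
  with m show ?thesis by (simp add: D_def)
qed

lemma expectation_diff_le_tv_dist:
  fixes h :: "'x \<Rightarrow> real"
  assumes "\<And>x. 0 \<le> h x" "\<And>x. h x \<le> 1"
  shows "E \<mu> h - E \<nu> h \<le> tv_dist \<mu> \<nu>"
proof (rule has_sum_mono[OF _ tv_dist_has_sum_pos_part])
  have "\<bar>h x\<bar> \<le> 1" for x using assms[of x] by simp
  then show "((\<lambda>x. pmf \<mu> x * h x - pmf \<nu> x * h x) has_sum (E \<mu> h - E \<nu> h)) UNIV"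
    by (intro has_sum_diff expectation_has_sum)
  have max_bound: "d * c \<le> max d 0" if "0 \<le> c" "c \<le> 1" for c d :: real
    using that mult_left_le[of c d] mult_nonpos_nonneg[of d c] by (cases "0 \<le> d") auto
  show "pmf \<mu> x * h x - pmf \<nu> x * h x \<le> max (pmf \<mu> x - pmf \<nu> x) 0" for x
    using max_bound[of "h x" "pmf \<mu> x - pmf \<nu> x", OF assms] by (simp add: left_diff_distrib)
qed

text \<open>The supremum in the dual description of \<open>tv_dist\<close> is attained at the indicator of
  \<open>{x. pmf \<nu> x < pmf \<mu> x}\<close>.\<close>
lemma tv_dist_eq_expectation_diff:
  obtains h :: "'x \<Rightarrow> real"
  where "\<And>x. 0 \<le> h x" "\<And>x. h x \<le> 1" "tv_dist \<mu> \<nu> = E \<mu> h - E \<nu> h"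
proof
  define h where "h x = (if pmf \<nu> x < pmf \<mu> x then 1 else 0 :: real)" for x
  show "0 \<le> h x" "h x \<le> 1" for x by (simp_all add: h_def)
  have "\<bar>h x\<bar> \<le> 1" for x by (simp add: h_def)
  then have "((\<lambda>x. pmf \<mu> x * h x - pmf \<nu> x * h x) has_sum (E \<mu> h - E \<nu> h)) UNIV"
    by (intro has_sum_diff expectation_has_sum)
  moreover have "(\<lambda>x. pmf \<mu> x * h x - pmf \<nu> x * h x) = (\<lambda>x. max (pmf \<mu> x - pmf \<nu> x) 0)"
    by (auto simp: h_def fun_eq_iff max_def)
  ultimately show "tv_dist \<mu> \<nu> = E \<mu> h - E \<nu> h"
    using has_sum_unique[OF tv_dist_has_sum_pos_part] by simp
qed

lemma tv_dist_self [simp]: "tv_dist \<mu> \<mu> = 0"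
  by (simp add: tv_dist_def)

lemma tv_dist_commute: "tv_dist \<mu> \<nu> = tv_dist \<nu> \<mu>"
  unfolding tv_dist_def by (simp add: abs_minus_commute)

lemma tv_dist_nonneg: "0 \<le> tv_dist \<mu> \<nu>"
  using expectation_diff_le_tv_dist[of "\<lambda>_. 0" \<mu> \<nu>] by simp

lemma tv_dist_le_1: "tv_dist \<mu> \<nu> \<le> 1"
proof -
  obtain h where h: "\<And>x. 0 \<le> h x" "\<And>x. h x \<le> 1" "tv_dist \<mu> \<nu> = E \<mu> h - E \<nu> h"
    using tv_dist_eq_expectation_diff[of \<mu> \<nu>] by blast
  show ?thesis
    using h(3) expectation_unit_interval[of h \<mu>, OF h(1,2)] expectation_unit_interval[of h \<nu>, OF h(1,2)]
    by linarith
qed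

lemma abs_tv_dist_le_1: "\<bar>tv_dist \<mu> \<nu>\<bar> \<le> 1"
  unfolding abs_le_iff using tv_dist_nonneg[of \<mu> \<nu>] tv_dist_le_1[of \<mu> \<nu>] by linarith

lemma tv_dist_triangle: "tv_dist \<mu> \<rho> \<le> tv_dist \<mu> \<nu> + tv_dist \<nu> \<rho>"
proof -
  obtain h where h: "\<And>x. 0 \<le> h x" "\<And>x. h x \<le> 1" "tv_dist \<mu> \<rho> = E \<mu> h - E \<rho> h"
    using tv_dist_eq_expectation_diff[of \<mu> \<rho>] by blast
  show ?thesis
    using h(3) expectation_diff_le_tv_dist[of h \<mu> \<nu>, OF h(1,2)]
      expectation_diff_le_tv_dist[of h \<nu> \<rho>, OF h(1,2)]
    by linarith
qed

lemma expectation_diff_le_tv_dist_bounded: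
  fixes h :: "'x \<Rightarrow> real"
  assumes h: "\<And>x. \<bar>h x\<bar> \<le> B"
  shows "E \<mu> h - E \<nu> h \<le> 2 * B * tv_dist \<mu> \<nu>"
proof (cases "B = 0")
  case True
  then have "h = (\<lambda>_. 0)" using h by (simp add: fun_eq_iff)
  then show ?thesis using True by simp
next
  case False
  then have B: "B > 0" using h[of undefined] by simp
  define k where "k x = (h x + B) / (2 * B)" for x
  have "0 \<le> k x" "k x \<le> 1" for x
    using h[of x] B by (auto simp: k_def field_simps abs_le_iff)
  then have "E \<mu> k - E \<nu> k \<le> tv_dist \<mu> \<nu>"
    by (rule expectation_diff_le_tv_dist)
  moreover have "E \<rho> k = (E \<rho> h + B) / (2 * B)" for \<rho>
    using integrable_measure_pmf_bounded[OF h, of \<rho>] unfolding k_def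
    by (simp add: integral_add)
  then have "E \<mu> k - E \<nu> k = (E \<mu> h - E \<nu> h) / (2 * B)"
    using B by (simp add: field_simps)
  ultimately show ?thesis
    using B by (simp add: field_simps)
qed

lemma tv_dist_bind_pmf_kernels:
  "tv_dist (bind_pmf M f) (bind_pmf M g) \<le> E M (\<lambda>y. tv_dist (f y) (g y))"
proof -
  obtain h where h: "\<And>x. 0 \<le> h x" "\<And>x. h x \<le> 1"
    and tv: "tv_dist (bind_pmf M f) (bind_pmf M g) = E (bind_pmf M f) h - E (bind_pmf M g) h"
    using tv_dist_eq_expectation_diff[of "bind_pmf M f" "bind_pmf M g"] by blast
  have h_bounded: "\<bar>h x\<bar> \<le> 1" for x
    using h[of x] by simp
  then have E_bounded: "\<bar>E \<rho> h\<bar> \<le> 1" for \<rho>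
    by (rule abs_expectation_le)
  have "tv_dist (bind_pmf M f) (bind_pmf M g) = E M (\<lambda>y. E (f y) h) - E M (\<lambda>y. E (g y) h)"
    using tv by (simp add: expectation_bind_pmf[OF h_bounded])
  also have "\<dots> = E M (\<lambda>y. E (f y) h - E (g y) h)"
    using integrable_measure_pmf_bounded[of "\<lambda>y. E (f y) h" 1 M, OF E_bounded]
      integrable_measure_pmf_bounded[of "\<lambda>y. E (g y) h" 1 M, OF E_bounded]
    by simp
  also have "\<dots> \<le> E M (\<lambda>y. tv_dist (f y) (g y))"
  proof (rule integral_mono)
    have "\<bar>E (f y) h - E (g y) h\<bar> \<le> 2" for y
      using E_bounded[of "f y"] E_bounded[of "g y"] by (simp add: abs_le_iff)
    then show "integrable (measure_pmf M) (\<lambda>y. E (f y) h - E (g y) h)"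
      by (rule integrable_measure_pmf_bounded)
    show "integrable (measure_pmf M) (\<lambda>y. tv_dist (f y) (g y))"
      by (rule integrable_measure_pmf_bounded[OF abs_tv_dist_le_1])
    show "E (f y) h - E (g y) h \<le> tv_dist (f y) (g y)" for y
      by (rule expectation_diff_le_tv_dist[OF h])
  qed
  finally show ?thesis .
qed

lemma tv_dist_bind_pmf_le:
  "tv_dist (bind_pmf \<mu> f) (bind_pmf \<nu> f) \<le> tv_dist \<mu> \<nu>"
proof -
  obtain h where h: "\<And>x. 0 \<le> h x" "\<And>x. h x \<le> 1"
    and tv: "tv_dist (bind_pmf \<mu> f) (bind_pmf \<nu> f) = E (bind_pmf \<mu> f) h - E (bind_pmf \<nu> f) h"
    using tv_dist_eq_expectation_diff[of "bind_pmf \<mu> f" "bind_pmf \<nu> f"] by blast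
  have "\<bar>h x\<bar> \<le> 1" for x using h[of x] by simp
  then have "tv_dist (bind_pmf \<mu> f) (bind_pmf \<nu> f) = E \<mu> (\<lambda>y. E (f y) h) - E \<nu> (\<lambda>y. E (f y) h)"
    using tv by (simp add: expectation_bind_pmf[where B=1])
  also have "\<dots> \<le> tv_dist \<mu> \<nu>"
    by (rule expectation_diff_le_tv_dist) (use expectation_unit_interval[of h, OF h] in auto)
  finally show ?thesis .
qed

lemma tv_dist_map_pmf_le: "tv_dist (map_pmf g \<mu>) (map_pmf g \<nu>) \<le> tv_dist \<mu> \<nu>"
  unfolding map_pmf_def by (rule tv_dist_bind_pmf_le)

lemma tv_dist_bind_pmf_uniform_le:
  assumes "\<And>y. tv_dist (f y) (g y) \<le> \<epsilon>"
  shows "tv_dist (bind_pmf \<mu> f) (bind_pmf \<nu> g) \<le> tv_dist \<mu> \<nu> + \<epsilon>"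
proof -
  have "tv_dist (bind_pmf \<nu> f) (bind_pmf \<nu> g) \<le> E \<nu> (\<lambda>y. tv_dist (f y) (g y))"
    by (rule tv_dist_bind_pmf_kernels)
  also have "\<dots> \<le> \<epsilon>"
    by (rule expectation_le_const[OF assms abs_tv_dist_le_1])
  finally show ?thesis
    using tv_dist_bind_pmf_le[of \<mu> f \<nu>] tv_dist_triangle[of "bind_pmf \<mu> f" "bind_pmf \<nu> g" "bind_pmf \<nu> f"]
    by linarith
qed

lemma tv_dist_sa_marg_le:
  assumes "\<And>s. tv_dist (\<pi> s) (\<pi>' s) \<le> \<epsilon>\<pi>"
  shows "tv_dist (sa_marg \<rho> \<pi> q t) (sa_marg \<rho> \<pi>' q' t)
           \<le> tv_dist (state_marg \<rho> \<pi> q t) (state_marg \<rho> \<pi>' q' t) + \<epsilon>\<pi>"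
  unfolding sa_marg_def
proof (rule tv_dist_bind_pmf_uniform_le)
  show "tv_dist (map_pmf (Pair s) (\<pi> s)) (map_pmf (Pair s) (\<pi>' s)) \<le> \<epsilon>\<pi>" for s
    using tv_dist_map_pmf_le assms by (rule order.trans)
qed

text \<open>The model error is only controlled along the marginals of \<open>\<pi>\<close> under \<open>q\<close>, so each
  step first replaces the dynamics along those marginals and only then changes the policy.\<close>
lemma tv_dist_state_marg_le:
  fixes \<pi> \<pi>' :: "'s \<Rightarrow> 'a pmf" and q q' :: "'s \<Rightarrow> 'a \<Rightarrow> 's pmf"
  assumes model: "\<And>t. E (sa_marg \<rho> \<pi> q t) (\<lambda>(s, a). tv_dist (q s a) (q' s a)) \<le> \<epsilon>m"
    and policy: "\<And>s. tv_dist (\<pi> s) (\<pi>' s) \<le> \<epsilon>\<pi>"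
  shows "tv_dist (state_marg \<rho> \<pi> q t) (state_marg \<rho> \<pi>' q' t) \<le> real t * (\<epsilon>m + \<epsilon>\<pi>)"
proof (induction t)
  case 0
  then show ?case by simp
next
  case (Suc t)
  let ?d1 = "state_marg \<rho> \<pi> q t" and ?d2 = "state_marg \<rho> \<pi>' q' t"
  let ?K1 = "\<lambda>s. bind_pmf (\<pi> s) (q s)" and ?K2 = "\<lambda>s. bind_pmf (\<pi>' s) (q' s)"
  let ?err = "\<lambda>s a. tv_dist (q s a) (q' s a)"
  have err_bound: "\<bar>case_prod ?err x\<bar> \<le> 1" for x
    by (cases x) (simp add: abs_tv_dist_le_1)
  have err_expectation: "\<bar>E (\<pi> s) (?err s)\<bar> \<le> 1" for s
    by (rule abs_expectation_le) (rule abs_tv_dist_le_1)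
  have step: "tv_dist (?K1 s) (?K2 s) \<le> E (\<pi> s) (?err s) + \<epsilon>\<pi>" for s
    using tv_dist_bind_pmf_kernels[of "\<pi> s" "q s" "q' s"]
      tv_dist_bind_pmf_le[of "\<pi> s" "q' s" "\<pi>' s"] policy[of s]
      tv_dist_triangle[of "?K1 s" "?K2 s" "bind_pmf (\<pi> s) (q' s)"]
    by linarith
  have "tv_dist (bind_pmf ?d1 ?K1) (bind_pmf ?d1 ?K2) \<le> E ?d1 (\<lambda>s. tv_dist (?K1 s) (?K2 s))"
    by (rule tv_dist_bind_pmf_kernels)
  also have "\<dots> \<le> E ?d1 (\<lambda>s. E (\<pi> s) (?err s) + \<epsilon>\<pi>)"
  proof (rule integral_mono)
    show "integrable (measure_pmf ?d1) (\<lambda>s. tv_dist (?K1 s) (?K2 s))"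
      by (rule integrable_measure_pmf_bounded[OF abs_tv_dist_le_1])
    have "\<bar>E (\<pi> s) (?err s) + \<epsilon>\<pi>\<bar> \<le> 1 + \<bar>\<epsilon>\<pi>\<bar>" for s
      using err_expectation[of s] abs_triangle_ineq[of "E (\<pi> s) (?err s)" \<epsilon>\<pi>] by linarith
    then show "integrable (measure_pmf ?d1) (\<lambda>s. E (\<pi> s) (?err s) + \<epsilon>\<pi>)"
      by (rule integrable_measure_pmf_bounded)
    show "tv_dist (?K1 s) (?K2 s) \<le> E (\<pi> s) (?err s) + \<epsilon>\<pi>" for s
      by (rule step)
  qed
  also have "\<dots> = E (sa_marg \<rho> \<pi> q t) (case_prod ?err) + \<epsilon>\<pi>"
    using integrable_measure_pmf_bounded[of "\<lambda>s. E (\<pi> s) (?err s)", OF err_expectation]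
    unfolding sa_marg_def
    by (simp add: expectation_bind_pmf[OF err_bound])
  also have "\<dots> \<le> \<epsilon>m + \<epsilon>\<pi>"
    using model[of t] by simp
  finally show ?case
    using Suc.IH tv_dist_bind_pmf_le[of ?d1 ?K2 ?d2]
      tv_dist_triangle[of "bind_pmf ?d1 ?K1" "bind_pmf ?d2 ?K2" "bind_pmf ?d1 ?K2"]
    by (simp add: algebra_simps)
qed

lemma tv_dist_sa_marg_model_le:
  fixes \<pi>D \<pi> :: "'s \<Rightarrow> 'a pmf" and p phat :: "'s \<Rightarrow> 'a \<Rightarrow> 's pmf"
  assumes model: "\<And>t. E (sa_marg \<rho> \<pi>D p t) (\<lambda>(s, a). tv_dist (p s a) (phat s a)) \<le> \<epsilon>m"
    and policy: "\<And>s. tv_dist (\<pi>D s) (\<pi> s) \<le> \<epsilon>\<pi>"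
  shows "tv_dist (sa_marg \<rho> \<pi> phat t) (sa_marg \<rho> \<pi> p t) \<le> real t * (\<epsilon>m + 2 * \<epsilon>\<pi>) + 2 * \<epsilon>\<pi>"
proof -
  have policy': "tv_dist (\<pi> s) (\<pi>D s) \<le> \<epsilon>\<pi>" for s
    using policy[of s] by (simp add: tv_dist_commute)
  have "tv_dist (state_marg \<rho> \<pi>D p t) (state_marg \<rho> \<pi> p t) \<le> real t * \<epsilon>\<pi>"
    using tv_dist_state_marg_le[where \<pi>=\<pi>D and \<pi>'=\<pi> and q=p and q'=p and \<epsilon>m=0, OF _ policy]
    by (simp add: split_def)
  then have "tv_dist (sa_marg \<rho> \<pi> p t) (sa_marg \<rho> \<pi>D p t) \<le> real t * \<epsilon>\<pi> + \<epsilon>\<pi>"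
    using tv_dist_sa_marg_le[where \<pi>=\<pi> and \<pi>'=\<pi>D and q=p and q'=p, OF policy', of \<rho> t]
      tv_dist_commute[of "state_marg \<rho> \<pi> p t" "state_marg \<rho> \<pi>D p t"]
    by linarith
  moreover have "tv_dist (sa_marg \<rho> \<pi>D p t) (sa_marg \<rho> \<pi> phat t) \<le> real t * (\<epsilon>m + \<epsilon>\<pi>) + \<epsilon>\<pi>"
    using tv_dist_sa_marg_le[where \<pi>=\<pi>D and \<pi>'=\<pi> and q=p and q'=phat, OF policy, of \<rho> t]
      tv_dist_state_marg_le[OF model policy, of t]
    by linarith
  ultimately show ?thesis
    using tv_dist_triangle[of "sa_marg \<rho> \<pi> p t" "sa_marg \<rho> \<pi> phat t" "sa_marg \<rho> \<pi>D p t"]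
      tv_dist_commute[of "sa_marg \<rho> \<pi> phat t"]
    by (simp add: algebra_simps)
qed

lemma sums_discounted_affine:
  fixes \<gamma> :: real
  assumes "\<bar>\<gamma>\<bar> < 1"
  shows "(\<lambda>t. \<gamma> ^ t * (real t * C + D)) sums (C * \<gamma> / (1 - \<gamma>)\<^sup>2 + D / (1 - \<gamma>))"
proof -
  have "(\<lambda>n. \<gamma> * (real (Suc n) * \<gamma> ^ n)) sums (\<gamma> * (1 / (1 - \<gamma>)\<^sup>2))"
    using geometric_deriv_sums[of \<gamma>] assms by (intro sums_mult) simp
  then have "(\<lambda>n. real n * \<gamma> ^ n) sums (\<gamma> / (1 - \<gamma>)\<^sup>2)"
    using sums_Suc_iff[of "\<lambda>n. real n * \<gamma> ^ n"] by (simp add: algebra_simps)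
  then have "(\<lambda>t. C * (real t * \<gamma> ^ t) + D * \<gamma> ^ t) sums (C * (\<gamma> / (1 - \<gamma>)\<^sup>2) + D * (1 / (1 - \<gamma>)))"
    using geometric_sums[of \<gamma>] assms by (intro sums_add sums_mult) simp_all
  then show ?thesis by (simp add: algebra_simps)
qed

lemma summable_discounted_bounded:
  fixes \<gamma> :: real
  assumes "\<bar>\<gamma>\<bar> < 1" "\<And>t. \<bar>a t\<bar> \<le> B"
  shows "summable (\<lambda>t. \<gamma> ^ t * a t)"
proof (rule summable_comparison_test')
  show "summable (\<lambda>t. B * \<bar>\<gamma>\<bar> ^ t)"
    using assms(1) by (simp add: summable_geometric)
  show "norm (\<gamma> ^ t * a t) \<le> B * \<bar>\<gamma>\<bar> ^ t" for t
    using mult_right_mono[OF assms(2)[of t], of "\<bar>\<gamma>\<bar> ^ t"]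
    by (simp add: abs_mult power_abs mult.commute)
qed

lemma ret_diff_le:
  assumes "0 \<le> \<gamma>" "\<gamma> < 1" and r: "\<And>s a. \<bar>r s a\<bar> \<le> rmax"
    and tv: "\<And>t. tv_dist (sa_marg \<rho> \<pi> q t) (sa_marg \<rho> \<pi>' q' t) \<le> \<delta> t"
    and S: "(\<lambda>t. \<gamma> ^ t * \<delta> t) sums S"
  shows "ret \<rho> \<gamma> r \<pi> q - ret \<rho> \<gamma> r \<pi>' q' \<le> 2 * rmax * S"
proof -
  define a where "a \<pi> q t = E (sa_marg \<rho> \<pi> q t) (\<lambda>(s, a). r s a)" for \<pi> q t
  have r': "\<bar>case_prod r x\<bar> \<le> rmax" for x by (cases x) (simp add: r)
  have summable: "summable (\<lambda>t. \<gamma> ^ t * a \<pi> q t)" for \<pi> q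
    using assms(1,2) abs_expectation_le[OF r'] unfolding a_def
    by (intro summable_discounted_bounded) auto
  have rmax: "0 \<le> rmax"
    using r[of undefined undefined] by simp
  have "a \<pi> q t - a \<pi>' q' t \<le> 2 * rmax * \<delta> t" for t
  proof -
    have "a \<pi> q t - a \<pi>' q' t \<le> 2 * rmax * tv_dist (sa_marg \<rho> \<pi> q t) (sa_marg \<rho> \<pi>' q' t)"
      unfolding a_def by (rule expectation_diff_le_tv_dist_bounded[OF r'])
    also have "\<dots> \<le> 2 * rmax * \<delta> t"
      using rmax by (intro mult_left_mono tv) simp
    finally show ?thesis .
  qed
  then have "\<gamma> ^ t * a \<pi> q t - \<gamma> ^ t * a \<pi>' q' t \<le> \<gamma> ^ t * (2 * rmax * \<delta> t)" for t
    using assms(1) mult_left_mono[of _ _ "\<gamma> ^ t"] by (simp flip: right_diff_distrib)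
  then have "(\<Sum>t. \<gamma> ^ t * a \<pi> q t - \<gamma> ^ t * a \<pi>' q' t) \<le> (\<Sum>t. \<gamma> ^ t * (2 * rmax * \<delta> t))"
  proof (rule suminf_le)
    show "summable (\<lambda>t. \<gamma> ^ t * (2 * rmax * \<delta> t))"
      using summable_mult[OF sums_summable[OF S], of "2 * rmax"] by (simp add: mult_ac)
  qed (use summable in \<open>auto intro: summable_diff\<close>)
  also have "\<dots> = 2 * rmax * S"
    using sums_mult[OF S, of "2 * rmax"] by (simp add: sums_iff algebra_simps)
  finally show ?thesis
    using suminf_diff[OF summable summable] unfolding ret_def a_def by simp
qed

theorem theorem1:
  fixes \<rho>0 :: "'s::countable pmf"
    and \<gamma> rmax \<epsilon>m \<epsilon>\<pi> :: real
    and r :: "'s \<Rightarrow> 'a::countable \<Rightarrow> real"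
    and p phat :: "'s \<Rightarrow> 'a \<Rightarrow> 's pmf"
    and \<pi>D \<pi> :: "'s \<Rightarrow> 'a pmf"
  assumes "0 < \<gamma>" and "\<gamma> < 1"
    and "\<And>s a. \<bar>r s a\<bar> \<le> rmax"
    and "\<And>t. measure_pmf.expectation (sa_marg \<rho>0 \<pi>D p t)
                 (\<lambda>(s, a). tv_dist (p s a) (phat s a)) \<le> \<epsilon>m"
    and "\<And>s. tv_dist (\<pi>D s) (\<pi> s) \<le> \<epsilon>\<pi>"
  shows "ret \<rho>0 \<gamma> r \<pi> p \<ge> ret \<rho>0 \<gamma> r \<pi> phat
           - 2 * \<gamma> * rmax * (\<epsilon>m + 2 * \<epsilon>\<pi>) / (1 - \<gamma>)^2
           - 4 * rmax * \<epsilon>\<pi> / (1 - \<gamma>)"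
proof -
  let ?S = "(\<epsilon>m + 2 * \<epsilon>\<pi>) * \<gamma> / (1 - \<gamma>)\<^sup>2 + 2 * \<epsilon>\<pi> / (1 - \<gamma>)"
  have "ret \<rho>0 \<gamma> r \<pi> phat - ret \<rho>0 \<gamma> r \<pi> p \<le> 2 * rmax * ?S"
  proof (rule ret_diff_le)
    show "tv_dist (sa_marg \<rho>0 \<pi> phat t) (sa_marg \<rho>0 \<pi> p t) \<le> real t * (\<epsilon>m + 2 * \<epsilon>\<pi>) + 2 * \<epsilon>\<pi>"
      for t using assms(4,5) by (rule tv_dist_sa_marg_model_le)
    show "(\<lambda>t. \<gamma> ^ t * (real t * (\<epsilon>m + 2 * \<epsilon>\<pi>) + 2 * \<epsilon>\<pi>)) sums ?S"
      using assms(1,2) by (intro sums_discounted_affine) simp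
  qed (use assms in auto)
  then show ?thesis
    by (simp add: field_simps)
qed

end
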